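(* Let $m,K$ be positive integers and $b_1,\dots,b_{3m}$ positive integers with $K/4<b_i<K/2$ and $\sum_i b_i=mK$. Set $W=100(5m)^2K$, $a_i=b_i+W$, $L=3W+K$, $\epsilon=1/(400(5m)^2)$, $h=\lfloor 4\epsilon L\rfloor$, $H=L+h$. Let $X$ be the multiset consisting of $a_1,\dots,a_{3m}$, $m$ copies of $-H$ and $m$ copies of $h$, and let $T_{\min}$ be a minimum-cost addition tree over $X$. For every node $z$ of $T_{\min}$ (identified with its value): (1) if $z<0$ then $|z|\le H$; (2) if $z>0$ then $z<H$.
   Context: An addition tree over a multiset $X$ is a full binary tree whose leaves are labeled by the elements of $X$ (each used once), each internal node having value equal to the sum of its children's values; its cost is the sum of the absolute values of the values of its internal nodes, and $T_{\min}$ is an addition tree over $X$ of minimum cost. *)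

theory Defs
  imports Complex_Main "HOL-Library.Multiset"
begin

datatype atree = Leaf int | Node atree atree

fun aval :: "atree \<Rightarrow> int" where
  "aval (Leaf x) = x"
| "aval (Node l r) = aval l + aval r"

fun leaves :: "atree \<Rightarrow> int multiset" where
  "leaves (Leaf x) = {#x#}"
| "leaves (Node l r) = leaves l + leaves r"

fun cost :: "atree \<Rightarrow> int" where
  "cost (Leaf x) = 0"
| "cost (Node l r) = \<bar>aval l + aval r\<bar> + cost l + cost r"

fun node_vals :: "atree \<Rightarrow> int set" where
  "node_vals (Leaf x) = {x}"
| "node_vals (Node l r) = insert (aval l + aval r) (node_vals l \<union> node_vals r)"

definition addition_tree_over :: "atree \<Rightarrow> int multiset \<Rightarrow> bool" where
  "addition_tree_over T X \<longleftrightarrow> leaves T = X"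

definition min_cost_tree :: "atree \<Rightarrow> int multiset \<Rightarrow> bool" where
  "min_cost_tree T X \<longleftrightarrow> addition_tree_over T X \<and>
     (\<forall>T'. addition_tree_over T' X \<longrightarrow> cost T \<le> cost T')"

end

theory Submission
  imports Defs
begin

text \<open>Let \<open>v\<close> be a node value of largest absolute value in a minimum-cost addition
  tree, and suppose \<open>v\<close> is neither a leaf label nor the value of the root. Descending
  from a node of value \<open>v\<close> one reaches an internal node \<open>v = x + y\<close> whose children
  \<open>x\<close>, \<open>y\<close> are nonzero and of the same sign. Let \<open>s\<close> be its sibling. Optimality
  forbids the rotations that pair \<open>s\<close> with \<open>x\<close> or with \<open>y\<close> instead, so
  \<open>|v| \<le> |x + s|\<close> and \<open>|v| \<le> |y + s|\<close>; together with \<open>|s| \<le> |v|\<close> and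
  \<open>|v + s| \<le> |v|\<close> this is impossible. Hence the largest absolute value is attained at a
  leaf or at the root, and in the reduction instance all leaves lie in \<open>[-H, H)\<close> while
  the root has value \<open>0\<close>.\<close>

fun subtrees :: "atree \<Rightarrow> atree set" where
  "subtrees (Leaf x) = {Leaf x}"
| "subtrees (Node l r) = insert (Node l r) (subtrees l \<union> subtrees r)"

lemma self_in_subtrees: "t \<in> subtrees t"
  by (cases t) auto

lemma subtrees_trans: "u \<in> subtrees t \<Longrightarrow> v \<in> subtrees u \<Longrightarrow> v \<in> subtrees t"
  by (induction t) auto

lemma node_vals_eq_aval_subtrees: "node_vals t = aval ` subtrees t"
  by (induction t) auto

lemma aval_in_node_vals: "aval t \<in> node_vals t"
  by (cases t) auto

lemma finite_node_vals: "finite (node_vals t)"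
  by (induction t) auto

lemma aval_eq_sum_leaves: "aval t = sum_mset (leaves t)"
  by (induction t) auto

lemma subtrees_has_parent:
  assumes "u \<in> subtrees t" and "u \<noteq> t"
  shows "\<exists>s. Node u s \<in> subtrees t \<or> Node s u \<in> subtrees t"
  using assms by (induction t) auto

lemma min_cost_tree_leaves: "min_cost_tree t X \<Longrightarrow> X = leaves t"
  by (simp add: min_cost_tree_def addition_tree_over_def)

lemma min_cost_tree_le:
  "min_cost_tree t X \<Longrightarrow> leaves t' = X \<Longrightarrow> cost t \<le> cost t'"
  by (simp add: min_cost_tree_def addition_tree_over_def)

lemma min_cost_tree_swap:
  "min_cost_tree (Node l r) X \<Longrightarrow> min_cost_tree (Node r l) X"
  by (simp add: min_cost_tree_def addition_tree_over_def ac_simps)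

lemma min_cost_tree_leaves_self: "min_cost_tree t X \<Longrightarrow> min_cost_tree t (leaves t)"
  by (frule min_cost_tree_leaves) simp

lemma min_cost_tree_left_child:
  assumes "min_cost_tree (Node l r) X"
  shows "min_cost_tree l (leaves l)"
proof -
  have "cost l \<le> cost l'" if "leaves l' = leaves l" for l'
  proof -
    have "cost (Node l r) \<le> cost (Node l' r)"
      using assms by (rule min_cost_tree_le) (simp add: that min_cost_tree_leaves[OF assms])
    moreover have "aval l' = aval l"
      using that by (simp add: aval_eq_sum_leaves)
    ultimately show ?thesis by simp
  qed
  then show ?thesis
    by (simp add: min_cost_tree_def addition_tree_over_def)
qed

lemma min_cost_tree_subtree:
  "min_cost_tree t X \<Longrightarrow> u \<in> subtrees t \<Longrightarrow> min_cost_tree u (leaves u)"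
proof (induction t arbitrary: X)
  case (Leaf x)
  then show ?case by (metis min_cost_tree_leaves_self subtrees.simps(1) singletonD)
next
  case (Node l r)
  have "min_cost_tree l (leaves l)" "min_cost_tree r (leaves r)"
    using Node.prems(1) min_cost_tree_left_child min_cost_tree_swap by blast+
  with Node show ?case by (auto intro: min_cost_tree_leaves_self)
qed

lemma min_cost_tree_rotation_le:
  assumes "min_cost_tree (Node (Node x y) s) X"
  shows "\<bar>aval x + aval y\<bar> \<le> \<bar>aval x + aval s\<bar>" and "\<bar>aval x + aval y\<bar> \<le> \<bar>aval y + aval s\<bar>"
proof -
  have "cost (Node (Node x y) s) \<le> cost (Node y (Node x s))"
    by (rule min_cost_tree_le[OF assms]) (simp add: min_cost_tree_leaves[OF assms] ac_simps)
  then show "\<bar>aval x + aval y\<bar> \<le> \<bar>aval x + aval s\<bar>"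
    by (simp add: ac_simps)
  have "cost (Node (Node x y) s) \<le> cost (Node x (Node y s))"
    by (rule min_cost_tree_le[OF assms]) (simp add: min_cost_tree_leaves[OF assms] ac_simps)
  then show "\<bar>aval x + aval y\<bar> \<le> \<bar>aval y + aval s\<bar>"
    by (simp add: ac_simps)
qed

lemma min_cost_tree_sibling:
  assumes opt: "min_cost_tree T X" and u: "u \<in> subtrees T" "u \<noteq> T"
  obtains s p where "s \<in> subtrees T" "p \<in> subtrees T" "aval p = aval u + aval s"
    "min_cost_tree (Node u s) (leaves p)"
proof -
  obtain s where "Node u s \<in> subtrees T \<or> Node s u \<in> subtrees T"
    using subtrees_has_parent[OF u] by blast
  then show ?thesis
  proof
    assume p: "Node u s \<in> subtrees T"
    show ?thesis
    proof (rule that[OF _ p])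
      show "s \<in> subtrees T"
        using subtrees_trans[OF p] self_in_subtrees by auto
      show "min_cost_tree (Node u s) (leaves (Node u s))"
        using min_cost_tree_subtree[OF opt p] .
    qed simp
  next
    assume p: "Node s u \<in> subtrees T"
    show ?thesis
    proof (rule that[OF _ p])
      show "s \<in> subtrees T"
        using subtrees_trans[OF p] self_in_subtrees by auto
      show "min_cost_tree (Node u s) (leaves (Node s u))"
        using min_cost_tree_swap[OF min_cost_tree_subtree[OF opt p]] .
    qed (simp add: add.commute)
  qed
qed

lemma sgn_eq_if_abs_le_abs_add:
  fixes x y :: int
  assumes "x \<noteq> 0" "y \<noteq> 0" "\<bar>x\<bar> \<le> \<bar>x + y\<bar>" "\<bar>y\<bar> \<le> \<bar>x + y\<bar>"
  shows "sgn x = sgn y"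
  using assms by (auto simp: sgn_if abs_if split: if_splits)

lemma max_abs_node_val_splits_same_sign:
  assumes "v \<in> node_vals t" and "\<forall>z\<in>node_vals t. \<bar>z\<bar> \<le> \<bar>v\<bar>" and "v \<notin># leaves t"
  shows "\<exists>x y. Node x y \<in> subtrees t \<and> aval x + aval y = v \<and>
    aval x \<noteq> 0 \<and> aval y \<noteq> 0 \<and> sgn (aval x) = sgn (aval y)"
  using assms
proof (induction t)
  case (Leaf x)
  then show ?case by simp
next
  case (Node l r)
  show ?case
  proof (cases "v \<in> node_vals l \<union> node_vals r")
    case True
    with Node show ?thesis by fastforce
  next
    case False
    then have "v = aval l + aval r" "aval l \<noteq> v" "aval r \<noteq> v"
      using Node.prems(1) aval_in_node_vals by auto
    moreover have "\<bar>aval l\<bar> \<le> \<bar>v\<bar>" "\<bar>aval r\<bar> \<le> \<bar>v\<bar>"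
      using Node.prems(2) aval_in_node_vals by auto
    ultimately show ?thesis
      by (intro exI[of _ l] exI[of _ r]) (auto intro: sgn_eq_if_abs_le_abs_add)
  qed
qed

lemma min_cost_tree_max_abs_node_val_in_leaves:
  assumes opt: "min_cost_tree T X" and v: "v \<in> node_vals T" "v \<noteq> aval T"
    and max: "\<forall>z\<in>node_vals T. \<bar>z\<bar> \<le> \<bar>v\<bar>"
  shows "v \<in># X"
proof (rule ccontr)
  assume "v \<notin># X"
  then obtain x y where xy: "Node x y \<in> subtrees T" "aval x + aval y = v"
    and sgn: "aval x \<noteq> 0" "aval y \<noteq> 0" "sgn (aval x) = sgn (aval y)"
    using max_abs_node_val_splits_same_sign v(1) max min_cost_tree_leaves[OF opt] by metis
  have "Node x y \<noteq> T"
    using xy(2) v(2) by auto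
  then obtain s p where s: "s \<in> subtrees T" and p: "p \<in> subtrees T"
    "aval p = aval (Node x y) + aval s" "min_cost_tree (Node (Node x y) s) (leaves p)"
    by (rule min_cost_tree_sibling[OF opt xy(1)])
  have "\<bar>aval p\<bar> \<le> \<bar>v\<bar>" "\<bar>aval s\<bar> \<le> \<bar>v\<bar>"
    using max p(1) s by (auto simp: node_vals_eq_aval_subtrees)
  moreover have "\<bar>v\<bar> \<le> \<bar>aval x + aval s\<bar>" "\<bar>v\<bar> \<le> \<bar>aval y + aval s\<bar>"
    using min_cost_tree_rotation_le[OF p(3)] xy(2) by auto
  ultimately show False
    using sgn xy(2) p(2) by (auto simp: sgn_if abs_if split: if_splits)
qed

lemma min_cost_tree_node_vals_bounded:
  assumes opt: "min_cost_tree T X" and leaves: "\<forall>l\<in>#X. -B \<le> l \<and> l < B"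
    and root: "-B \<le> aval T" "aval T < B"
  shows "\<forall>z\<in>node_vals T. -B \<le> z \<and> z < B"
proof -
  have max_bounded: "-B \<le> w \<and> w < B"
    if "w \<in> node_vals T" "\<forall>z\<in>node_vals T. \<bar>z\<bar> \<le> \<bar>w\<bar>" for w
  proof (cases "w = aval T")
    case False
    then have "w \<in># X"
      using min_cost_tree_max_abs_node_val_in_leaves[OF opt that(1) _ that(2)] by blast
    then show ?thesis using leaves by blast
  qed (use root in simp)
  have "Max (abs ` node_vals T) \<in> abs ` node_vals T"
    using aval_in_node_vals[of T] by (intro Max_in) (auto simp: finite_node_vals)
  then obtain v where v: "v \<in> node_vals T" "\<bar>v\<bar> = Max (abs ` node_vals T)"
    by (metis imageE)
  then have v_max: "\<forall>z\<in>node_vals T. \<bar>z\<bar> \<le> \<bar>v\<bar>"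
    by (auto intro: Max_ge finite_imageI finite_node_vals)
  have "\<bar>v\<bar> \<le> B"
    using max_bounded[OF v(1) v_max] by linarith
  then have abs_le: "\<bar>z\<bar> \<le> B" if "z \<in> node_vals T" for z
    using v_max that by fastforce
  show ?thesis
  proof
    fix z assume z: "z \<in> node_vals T"
    have "z \<noteq> B"
    proof
      assume "z = B"
      then have "\<forall>y\<in>node_vals T. \<bar>y\<bar> \<le> \<bar>z\<bar>"
        using abs_le abs_le[OF z] by simp
      then show False
        using max_bounded[OF z] \<open>z = B\<close> by simp
    qed
    then show "-B \<le> z \<and> z < B"
      using abs_le[OF z] by auto
  qed
qed

lemma set_upt_one_eq_atLeastAtMost: "set [1..<n + 1] = {1..n}"
  by auto

theorem lemma2p6:
  fixes m K :: nat and b :: "nat \<Rightarrow> int"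
    and W L H h :: int and \<epsilon> :: real and X :: "int multiset" and T :: atree
  assumes "m > 0" and "K > 0"
    and "\<forall>i\<in>{1..3*m}. b i > 0 \<and> real K / 4 < real_of_int (b i) \<and> real_of_int (b i) < real K / 2"
    and "(\<Sum>i=1..3*m. b i) = int m * int K"
    and "W = 100 * (5 * int m)^2 * int K"
    and "L = 3 * W + int K"
    and "\<epsilon> = 1 / (400 * (5 * real m)^2)"
    and "h = \<lfloor>4 * \<epsilon> * real_of_int L\<rfloor>"
    and "H = L + h"
    and "X = mset (map (\<lambda>i. b i + W) [1..<3*m+1]) + replicate_mset m (- H) + replicate_mset m h"
    and "min_cost_tree T X"
  shows "\<forall>z\<in>node_vals T. (z < 0 \<longrightarrow> \<bar>z\<bar> \<le> H) \<and> (z > 0 \<longrightarrow> z < H)"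
proof -
  have "W \<ge> 0"
    using assms(5) by simp
  then have "L > 0"
    using assms(2,6) by simp
  then have "h \<ge> 0"
    using assms(7,8) by simp
  have b_bounds: "0 < b i \<and> b i < int K" if "i \<in> {1..3*m}" for i
    using assms(3) that by fastforce
  have leaves_bounded: "\<forall>l\<in>#X. -H \<le> l \<and> l < H"
  proof
    fix l assume "l \<in># X"
    then consider i where "i \<in> {1..3*m}" "l = b i + W" | "l = -H" | "l = h"
      using assms(10) by (auto simp only: set_mset_union set_mset_mset set_map
          set_upt_one_eq_atLeastAtMost in_replicate_mset Un_iff image_iff)
    then show "-H \<le> l \<and> l < H"
      using b_bounds assms(6,9) \<open>W \<ge> 0\<close> \<open>L > 0\<close> \<open>h \<ge> 0\<close> by cases force+
  qed
  have "sum_mset X = (\<Sum>i=1..3*m. b i + W) - int m * H + int m * h"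
    using assms(10) by (simp only: sum_mset.union sum_mset_sum_list sum_mset_replicate_mset
        sum_list_distinct_conv_sum_set[OF distinct_upt] set_upt_one_eq_atLeastAtMost)
  also have "\<dots> = 0"
    using assms(4,6,9) by (simp add: sum.distrib algebra_simps)
  finally have "aval T = 0"
    using min_cost_tree_leaves[OF assms(11)] by (simp add: aval_eq_sum_leaves)
  moreover have "H > 0"
    using assms(9) \<open>L > 0\<close> \<open>h \<ge> 0\<close> by simp
  ultimately have "\<forall>z\<in>node_vals T. -H \<le> z \<and> z < H"
    by (intro min_cost_tree_node_vals_bounded[OF assms(11) leaves_bounded]) simp_all
  then show ?thesis
    by auto
qed

end
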